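(* Let $\langle \Lambda, \mathcal{S}\rangle$ be a measurable space and let $P_{00}, P_{0+}, P_{+0}, P_{++}$ be four probability measures on it that satisfy the Preparation Uninformativeness Condition, i.e. there is a measure $Q$ dominating all four, with densities $\mu_{xy} = dP_{xy}/dQ$ ($x,y\in\{0,+\}$) such that for all $\lambda\in\Lambda$, $$\mu_{00}(\lambda)\,\mu_{++}(\lambda) = \mu_{0+}(\lambda)\,\mu_{+0}(\lambda).$$ Let $\varepsilon>0$ and suppose there is an $m$-outcome experiment $E$, given by measurable functions $p_k:\Lambda\to[0,1]$, $k\in K$, $|K|=m$, with $\sum_{k\in K}p_k(\lambda)=1$ for all $\lambda$, such that each outcome $k$ is $\varepsilon$-precluded by some $P_{xy}$, i.e. for each $k$ there exist $x,y\in\{0,+\}$ with $\int_\Lambda p_k\,dP_{xy}\le\varepsilon$. Then $$\delta(P_{00},P_{++}) \ge H(P_{00},P_{++})^2 \ge 1-2\sqrt{m\varepsilon}$$ and $$\delta(P_{0+},P_{+0}) \ge H(P_{0+},P_{+0})^2 \ge 1-2\sqrt{m\varepsilon}.$$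
   Context: For probability measures $P,P'$ on $\langle\Lambda,\mathcal{S}\rangle$ with densities $p,q$ with respect to a common dominating measure $\nu$: the total variation distance is $\delta(P,P')=\sup_{A\in\mathcal{S}}|P(A)-P'(A)|=1-\int_\Lambda\min(p,q)\,d\nu$, and the Hellinger distance $H(P,P')$ is defined by $H(P,P')^2=\frac12\int_\Lambda(\sqrt p-\sqrt q)^2\,d\nu = 1-\int_\Lambda\sqrt{pq}\,d\nu$. *)

theory Defs
  imports "HOL-Probability.Probability"
begin

definition tv_dist :: "'a measure \<Rightarrow> 'a measure \<Rightarrow> real" where
  "tv_dist P P' = (SUP A\<in>sets P. \<bar>measure P A - measure P' A\<bar>)"

definition hellinger_sq :: "'a measure \<Rightarrow> ('a \<Rightarrow> real) \<Rightarrow> ('a \<Rightarrow> real) \<Rightarrow> real" where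
  "hellinger_sq \<nu> p q = 1 - (\<integral>x. sqrt (p x * q x) \<partial>\<nu>)"

end

theory Submission
  imports Defs
begin

text \<open>Total variation dominates the squared Hellinger distance because min(p, q) \<le> sqrt(p q).
  For the Hellinger bound, write T for the sum of the four densities and m = card K. The
  preparation uninformativeness condition makes sqrt(mu00 mupp) = sqrt(mu0p mup0) the geometric
  mean of any single density a with a function below T, so by AM-GM
  sqrt(mu00 mupp) \<le> (t a + T/t)/2 for every t > 0. Splitting the Bhattacharyya integral along the
  outcomes p_k and using, for each k, a density that precludes k gives
  \<integral> sqrt(mu00 mupp) \<le> (m t \<epsilon> + 4/t)/2, which equals 2 sqrt(m \<epsilon>) for t = 2/sqrt(m \<epsilon>).\<close>

lemma sqrt_mult_le_scaled_sum:
  fixes a b c t :: real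
  assumes "0 \<le> a" "0 \<le> b" "b \<le> c" "0 < t"
  shows "sqrt (a * b) \<le> (t * a + c / t) / 2"
proof -
  have "sqrt (a * b) = sqrt ((t * a) * (b / t))" using assms by simp
  also have "\<dots> \<le> (t * a + b / t) / 2" using assms by (intro arith_geo_mean_sqrt) auto
  also have "\<dots> \<le> (t * a + c / t) / 2" using assms by (simp add: divide_right_mono)
  finally show ?thesis .
qed

lemma min_le_sqrt_mult:
  fixes a b :: real
  assumes "0 \<le> a" "0 \<le> b"
  shows "min a b \<le> sqrt (a * b)"
proof -
  have "sqrt (min a b * min a b) \<le> sqrt (a * b)"
    using assms by (intro real_sqrt_le_mono mult_mono) auto
  then show ?thesis using assms by simp
qed

lemma integrable_mult_unit_interval:
  fixes f g :: "'a \<Rightarrow> real"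
  assumes "integrable M f" "g \<in> borel_measurable M" "\<And>x. x \<in> space M \<Longrightarrow> 0 \<le> g x \<and> g x \<le> 1"
  shows "integrable M (\<lambda>x. g x * f x)"
  using assms by (intro Bochner_Integration.integrable_bound[OF assms(1)] AE_I2)
    (auto simp: abs_mult intro: mult_left_le_one_le)

lemma integral_density_real:
  fixes \<mu> f :: "'a \<Rightarrow> real"
  assumes "\<mu> \<in> borel_measurable M" "\<And>x. x \<in> space M \<Longrightarrow> 0 \<le> \<mu> x" "f \<in> borel_measurable M"
  shows "integral\<^sup>L (density M \<mu>) f = (\<integral>x. f x * \<mu> x \<partial>M)"
  using integral_density[of f M \<mu>] assms by (simp add: mult.commute)

lemma prob_space_density_integral:
  fixes \<mu> :: "'a \<Rightarrow> real"
  assumes "\<mu> \<in> borel_measurable M" "\<And>x. x \<in> space M \<Longrightarrow> 0 \<le> \<mu> x" "prob_space (density M \<mu>)"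
  shows "integrable M \<mu>" "integral\<^sup>L M \<mu> = 1"
proof -
  have "integrable (density M \<mu>) (\<lambda>_. 1::real)"
    using assms(3) by (simp add: finite_measure.integrable_const prob_space.finite_measure)
  then show "integrable M \<mu>"
    using assms by (subst (asm) integrable_density) auto
  have "integral\<^sup>L M \<mu> = integral\<^sup>L (density M \<mu>) (\<lambda>_. 1::real)"
    using integral_density_real[OF assms(1,2), of "\<lambda>_. 1"] by simp
  also have "\<dots> = 1"
    using prob_space.prob_space[OF assms(3)] by simp
  finally show "integral\<^sup>L M \<mu> = 1" .
qed

lemma tv_dist_density_ge:
  fixes a b :: "'a \<Rightarrow> real"
  assumes [measurable]: "a \<in> borel_measurable M" "b \<in> borel_measurable M"
    and a_nonneg: "\<And>x. x \<in> space M \<Longrightarrow> 0 \<le> a x"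
    and b_nonneg: "\<And>x. x \<in> space M \<Longrightarrow> 0 \<le> b x"
    and prob_a: "prob_space (density M a)" and prob_b: "prob_space (density M b)"
  shows "1 - (\<integral>x. min (a x) (b x) \<partial>M) \<le> tv_dist (density M a) (density M b)"
proof -
  have int_a: "integrable M a" "integral\<^sup>L M a = 1"
    using prob_space_density_integral[OF _ a_nonneg prob_a] by auto
  have int_b: "integrable M b"
    using prob_space_density_integral[OF _ b_nonneg prob_b] by auto
  define A where "A = {x \<in> space M. b x < a x}"
  have A_sets[measurable]: "A \<in> sets M" unfolding A_def by measurable
  have measure_A: "measure (density M f) A = (\<integral>x. f x * indicator A x \<partial>M)"
    if [measurable]: "f \<in> borel_measurable M" and "\<And>x. x \<in> space M \<Longrightarrow> 0 \<le> f x" for f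
    using integral_density_real[OF that, of "indicator A"] by (simp add: mult.commute)
  have "measure (density M a) A - measure (density M b) A
      = (\<integral>x. a x * indicator A x - b x * indicator A x \<partial>M)"
    using int_a int_b a_nonneg b_nonneg
    by (simp add: measure_A integrable_real_mult_indicator)
  also have "\<dots> = (\<integral>x. a x - min (a x) (b x) \<partial>M)"
    by (intro Bochner_Integration.integral_cong) (auto simp: A_def indicator_def min_def)
  also have "\<dots> = 1 - (\<integral>x. min (a x) (b x) \<partial>M)"
  proof -
    have "integrable M (\<lambda>x. min (a x) (b x))"
      by (rule Bochner_Integration.integrable_bound[OF int_a(1)])
        (use a_nonneg b_nonneg in auto)
    then show ?thesis using int_a by simp
  qed
  finally have gap: "1 - (\<integral>x. min (a x) (b x) \<partial>M)
      \<le> \<bar>measure (density M a) A - measure (density M b) A\<bar>" by simp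
  have "bdd_above ((\<lambda>B. \<bar>measure (density M a) B - measure (density M b) B\<bar>) ` sets (density M a))"
  proof (rule bdd_aboveI2)
    fix B
    have "measure (density M a) B \<le> 1" "measure (density M b) B \<le> 1"
      using prob_space.prob_le_1[OF prob_a] prob_space.prob_le_1[OF prob_b] by auto
    then show "\<bar>measure (density M a) B - measure (density M b) B\<bar> \<le> 1"
      using measure_nonneg[of "density M a" B] measure_nonneg[of "density M b" B] by linarith
  qed
  then show ?thesis
    unfolding tv_dist_def using gap A_sets by (intro cSUP_upper2) auto
qed

lemma hellinger_sq_le_tv_dist:
  fixes a b :: "'a \<Rightarrow> real"
  assumes [measurable]: "a \<in> borel_measurable M" "b \<in> borel_measurable M"
    and a_nonneg: "\<And>x. x \<in> space M \<Longrightarrow> 0 \<le> a x"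
    and b_nonneg: "\<And>x. x \<in> space M \<Longrightarrow> 0 \<le> b x"
    and prob_a: "prob_space (density M a)" and prob_b: "prob_space (density M b)"
  shows "hellinger_sq M a b \<le> tv_dist (density M a) (density M b)"
proof -
  have int_a: "integrable M a" and int_b: "integrable M b"
    using prob_space_density_integral(1)[OF _ a_nonneg prob_a]
      prob_space_density_integral(1)[OF _ b_nonneg prob_b] by auto
  have "(\<integral>x. min (a x) (b x) \<partial>M) \<le> (\<integral>x. sqrt (a x * b x) \<partial>M)"
  proof (rule integral_mono)
    show "integrable M (\<lambda>x. min (a x) (b x))"
      by (rule Bochner_Integration.integrable_bound[OF int_a])
        (use a_nonneg b_nonneg in auto)
    show "integrable M (\<lambda>x. sqrt (a x * b x))"
    proof (rule Bochner_Integration.integrable_bound[OF Bochner_Integration.integrable_add[OF int_a int_b]])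
      show "AE x in M. norm (sqrt (a x * b x)) \<le> norm (a x + b x)"
        using a_nonneg b_nonneg arith_geo_mean_sqrt by force
    qed measurable
  qed (use a_nonneg b_nonneg min_le_sqrt_mult in auto)
  then show ?thesis
    unfolding hellinger_sq_def using tv_dist_density_ge[OF assms] by linarith
qed

lemma integral_le_by_partition_of_unity:
  fixes S T :: "'a \<Rightarrow> real" and p :: "'k \<Rightarrow> 'a \<Rightarrow> real" and t \<epsilon> :: real
  assumes S_int: "integrable M S" and T_int: "integrable M T"
    and "finite K" and "0 < t"
    and p_meas: "\<And>k. k \<in> K \<Longrightarrow> p k \<in> borel_measurable M"
    and p_range: "\<And>k x. k \<in> K \<Longrightarrow> x \<in> space M \<Longrightarrow> 0 \<le> p k x \<and> p k x \<le> 1"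
    and p_sum: "\<And>x. x \<in> space M \<Longrightarrow> (\<Sum>k\<in>K. p k x) = 1"
    and local_bound: "\<And>k. k \<in> K \<Longrightarrow> \<exists>a. integrable M a \<and> (\<integral>x. p k x * a x \<partial>M) \<le> \<epsilon>
                              \<and> (\<forall>x\<in>space M. S x \<le> (t * a x + T x / t) / 2)"
  shows "integral\<^sup>L M S \<le> (real (card K) * t * \<epsilon> + integral\<^sup>L M T / t) / 2"
proof -
  have pS_int: "integrable M (\<lambda>x. p k x * S x)" and pT_int: "integrable M (\<lambda>x. p k x * T x)"
    if "k \<in> K" for k
    using that by (auto intro!: integrable_mult_unit_interval S_int T_int p_meas p_range)
  have split: "integral\<^sup>L M f = (\<Sum>k\<in>K. \<integral>x. p k x * f x \<partial>M)"
    if "\<And>k. k \<in> K \<Longrightarrow> integrable M (\<lambda>x. p k x * f x)" for f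
  proof -
    have "integral\<^sup>L M f = (\<integral>x. (\<Sum>k\<in>K. p k x * f x) \<partial>M)"
      by (intro Bochner_Integration.integral_cong) (auto simp: p_sum sum_distrib_right[symmetric])
    also have "\<dots> = (\<Sum>k\<in>K. \<integral>x. p k x * f x \<partial>M)"
      using that by (intro Bochner_Integration.integral_sum) auto
    finally show ?thesis .
  qed
  have local_integral: "(\<integral>x. p k x * S x \<partial>M) \<le> (t * \<epsilon> + (\<integral>x. p k x * T x \<partial>M) / t) / 2"
    if k: "k \<in> K" for k
  proof -
    obtain a where a_int: "integrable M a" and a_small: "(\<integral>x. p k x * a x \<partial>M) \<le> \<epsilon>"
      and S_le: "\<And>x. x \<in> space M \<Longrightarrow> S x \<le> (t * a x + T x / t) / 2"
      using local_bound[OF k] by blast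
    have pa_int: "integrable M (\<lambda>x. p k x * a x)"
      using k by (auto intro!: integrable_mult_unit_interval a_int p_meas p_range)
    have "(\<integral>x. p k x * S x \<partial>M) \<le> (\<integral>x. (t * (p k x * a x) + p k x * T x / t) / 2 \<partial>M)"
    proof (rule integral_mono)
      fix x assume x: "x \<in> space M"
      have "p k x * S x \<le> p k x * ((t * a x + T x / t) / 2)"
        using S_le[OF x] p_range[OF k x] by (intro mult_left_mono) auto
      then show "p k x * S x \<le> (t * (p k x * a x) + p k x * T x / t) / 2"
        by (simp add: algebra_simps add_divide_distrib)
    qed (use pS_int[OF k] pa_int pT_int[OF k] in auto)
    also have "\<dots> = (t * (\<integral>x. p k x * a x \<partial>M) + (\<integral>x. p k x * T x \<partial>M) / t) / 2"
      using pa_int pT_int[OF k] by simp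
    also have "\<dots> \<le> (t * \<epsilon> + (\<integral>x. p k x * T x \<partial>M) / t) / 2"
      using a_small \<open>0 < t\<close> by simp
    finally show ?thesis .
  qed
  have "integral\<^sup>L M S = (\<Sum>k\<in>K. \<integral>x. p k x * S x \<partial>M)"
    using pS_int by (rule split)
  also have "\<dots> \<le> (\<Sum>k\<in>K. (t * \<epsilon> + (\<integral>x. p k x * T x \<partial>M) / t) / 2)"
    using local_integral by (rule sum_mono)
  also have "\<dots> = (real (card K) * t * \<epsilon> + (\<Sum>k\<in>K. \<integral>x. p k x * T x \<partial>M) / t) / 2"
    by (simp add: sum.distrib sum_divide_distrib[symmetric] add_divide_distrib)
  also have "(\<Sum>k\<in>K. \<integral>x. p k x * T x \<partial>M) = integral\<^sup>L M T"
    using pT_int by (rule split[symmetric])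
  finally show ?thesis .
qed

lemma integral_sqrt_mult_le_of_preclusion:
  fixes a1 a2 a3 a4 :: "'a \<Rightarrow> real" and p :: "'k \<Rightarrow> 'a \<Rightarrow> real" and \<epsilon> :: real
  assumes [measurable]: "a1 \<in> borel_measurable M" "a2 \<in> borel_measurable M"
      "a3 \<in> borel_measurable M" "a4 \<in> borel_measurable M"
    and nonneg: "\<And>x. x \<in> space M \<Longrightarrow> 0 \<le> a1 x" "\<And>x. x \<in> space M \<Longrightarrow> 0 \<le> a2 x"
      "\<And>x. x \<in> space M \<Longrightarrow> 0 \<le> a3 x" "\<And>x. x \<in> space M \<Longrightarrow> 0 \<le> a4 x"
    and int: "integrable M a1" "integrable M a2" "integrable M a3" "integrable M a4"
    and int_le: "integral\<^sup>L M a1 \<le> 1" "integral\<^sup>L M a2 \<le> 1"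
      "integral\<^sup>L M a3 \<le> 1" "integral\<^sup>L M a4 \<le> 1"
    and product: "\<And>x. x \<in> space M \<Longrightarrow> a1 x * a2 x = a3 x * a4 x"
    and "0 < \<epsilon>" and "finite K"
    and p_meas: "\<And>k. k \<in> K \<Longrightarrow> p k \<in> borel_measurable M"
    and p_range: "\<And>k x. k \<in> K \<Longrightarrow> x \<in> space M \<Longrightarrow> 0 \<le> p k x \<and> p k x \<le> 1"
    and p_sum: "\<And>x. x \<in> space M \<Longrightarrow> (\<Sum>k\<in>K. p k x) = 1"
    and precluded: "\<And>k. k \<in> K \<Longrightarrow> \<exists>a\<in>{a1, a2, a3, a4}. (\<integral>x. p k x * a x \<partial>M) \<le> \<epsilon>"
  shows "(\<integral>x. sqrt (a1 x * a2 x) \<partial>M) \<le> 2 * sqrt (real (card K) * \<epsilon>)"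
proof (cases "K = {}")
  case True
  then have "space M = {}" using p_sum by auto
  then show ?thesis using True by (simp add: Bochner_Integration.integral_empty)
next
  case False
  define s where "s = sqrt (real (card K) * \<epsilon>)"
  have "0 < s" using False \<open>finite K\<close> \<open>0 < \<epsilon>\<close> by (simp add: s_def card_gt_0_iff)
  define t where "t = 2 / s"
  have "0 < t" using \<open>0 < s\<close> by (simp add: t_def)
  define T where "T = (\<lambda>x. a1 x + a2 x + a3 x + a4 x)"
  have T_int: "integrable M T"
    unfolding T_def using int by auto
  have T_le: "integral\<^sup>L M T \<le> 4"
    unfolding T_def using int int_le by simp
  have S_int: "integrable M (\<lambda>x. sqrt (a1 x * a2 x))"
  proof (rule Bochner_Integration.integrable_bound[OF T_int _ AE_I2])
    fix x assume x: "x \<in> space M"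
    have "sqrt (a1 x * a2 x) \<le> (a1 x + a2 x) / 2"
      using nonneg(1,2)[OF x] by (rule arith_geo_mean_sqrt)
    then show "norm (sqrt (a1 x * a2 x)) \<le> norm (T x)"
      using nonneg[OF x] by (simp add: T_def)
  qed measurable
  have S_le: "sqrt (a1 x * a2 x) \<le> (t * a x + T x / t) / 2"
    if x: "x \<in> space M" and a: "a \<in> {a1, a2, a3, a4}" for x a
  proof -
    note n = nonneg[OF x]
    have below_T: "a1 x \<le> T x" "a2 x \<le> T x" "a3 x \<le> T x" "a4 x \<le> T x"
      using n by (simp_all add: T_def)
    have "sqrt (a1 x * a2 x) \<le> (t * a1 x + T x / t) / 2"
      "sqrt (a2 x * a1 x) \<le> (t * a2 x + T x / t) / 2"
      "sqrt (a3 x * a4 x) \<le> (t * a3 x + T x / t) / 2"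
      "sqrt (a4 x * a3 x) \<le> (t * a4 x + T x / t) / 2"
      using n below_T \<open>0 < t\<close> by (intro sqrt_mult_le_scaled_sum; simp)+
    then show ?thesis
      using a product[OF x] by (auto simp: mult.commute)
  qed
  have "(\<integral>x. sqrt (a1 x * a2 x) \<partial>M) \<le> (real (card K) * t * \<epsilon> + integral\<^sup>L M T / t) / 2"
  proof (rule integral_le_by_partition_of_unity[OF S_int T_int \<open>finite K\<close> \<open>0 < t\<close> p_meas p_range p_sum])
    fix k assume "k \<in> K"
    then obtain a where "a \<in> {a1, a2, a3, a4}" "(\<integral>x. p k x * a x \<partial>M) \<le> \<epsilon>"
      using precluded by blast
    then show "\<exists>a. integrable M a \<and> (\<integral>x. p k x * a x \<partial>M) \<le> \<epsilon>
        \<and> (\<forall>x\<in>space M. sqrt (a1 x * a2 x) \<le> (t * a x + T x / t) / 2)"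
      using int S_le by (intro exI[of _ a]) auto
  qed
  also have "\<dots> \<le> (real (card K) * t * \<epsilon> + 4 / t) / 2"
    using T_le \<open>0 < t\<close> by (simp add: divide_right_mono)
  also have "\<dots> = 2 * s"
  proof -
    have "s * s = real (card K) * \<epsilon>" using \<open>0 < \<epsilon>\<close> by (simp add: s_def)
    then show ?thesis using \<open>0 < s\<close> by (simp add: t_def field_simps)
  qed
  finally show ?thesis by (simp add: s_def)
qed


theorem theorem2:
  fixes Q :: "'a measure"
    and mu00 mu0p mup0 mupp :: "'a \<Rightarrow> real"
    and P00 P0p Pp0 Ppp :: "'a measure"
    and K :: "'k set" and p :: "'k \<Rightarrow> 'a \<Rightarrow> real" and \<epsilon> :: real
  assumes meas: "mu00 \<in> borel_measurable Q" "mu0p \<in> borel_measurable Q"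
                "mup0 \<in> borel_measurable Q" "mupp \<in> borel_measurable Q"
    and nonneg: "\<And>x. x \<in> space Q \<Longrightarrow> 0 \<le> mu00 x" "\<And>x. x \<in> space Q \<Longrightarrow> 0 \<le> mu0p x"
                "\<And>x. x \<in> space Q \<Longrightarrow> 0 \<le> mup0 x" "\<And>x. x \<in> space Q \<Longrightarrow> 0 \<le> mupp x"
    and P00_def: "P00 = density Q (\<lambda>x. ennreal (mu00 x))"
    and P0p_def: "P0p = density Q (\<lambda>x. ennreal (mu0p x))"
    and Pp0_def: "Pp0 = density Q (\<lambda>x. ennreal (mup0 x))"
    and Ppp_def: "Ppp = density Q (\<lambda>x. ennreal (mupp x))"
    and prob: "prob_space P00" "prob_space P0p" "prob_space Pp0" "prob_space Ppp"
    and PUC: "\<And>x. x \<in> space Q \<Longrightarrow> mu00 x * mupp x = mu0p x * mup0 x"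
    and eps: "\<epsilon> > 0"
    and finK: "finite K"
    and p_meas: "\<And>k. k \<in> K \<Longrightarrow> p k \<in> borel_measurable Q"
    and p_range: "\<And>k x. k \<in> K \<Longrightarrow> x \<in> space Q \<Longrightarrow> 0 \<le> p k x \<and> p k x \<le> 1"
    and p_sum: "\<And>x. x \<in> space Q \<Longrightarrow> (\<Sum>k\<in>K. p k x) = 1"
    and precl: "\<And>k. k \<in> K \<Longrightarrow> \<exists>P\<in>{P00, P0p, Pp0, Ppp}. (\<integral>x. p k x \<partial>P) \<le> \<epsilon>"
  shows "tv_dist P00 Ppp \<ge> hellinger_sq Q mu00 mupp
         \<and> hellinger_sq Q mu00 mupp \<ge> 1 - 2 * sqrt (real (card K) * \<epsilon>)
         \<and> tv_dist P0p Pp0 \<ge> hellinger_sq Q mu0p mup0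
         \<and> hellinger_sq Q mu0p mup0 \<ge> 1 - 2 * sqrt (real (card K) * \<epsilon>)"
proof -
  have int: "integrable Q mu00" "integrable Q mupp" "integrable Q mu0p" "integrable Q mup0"
    and int_one: "integral\<^sup>L Q mu00 = 1" "integral\<^sup>L Q mupp = 1"
      "integral\<^sup>L Q mu0p = 1" "integral\<^sup>L Q mup0 = 1"
    using prob_space_density_integral[OF meas(1) nonneg(1) prob(1)[unfolded P00_def]]
      prob_space_density_integral[OF meas(4) nonneg(4) prob(4)[unfolded Ppp_def]]
      prob_space_density_integral[OF meas(2) nonneg(2) prob(2)[unfolded P0p_def]]
      prob_space_density_integral[OF meas(3) nonneg(3) prob(3)[unfolded Pp0_def]]
    by auto
  have precluded: "\<exists>a\<in>{mu00, mupp, mu0p, mup0}. (\<integral>x. p k x * a x \<partial>Q) \<le> \<epsilon>" if k: "k \<in> K" for k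
    using precl[OF k] integral_density_real[OF meas(1) nonneg(1) p_meas[OF k]]
      integral_density_real[OF meas(2) nonneg(2) p_meas[OF k]]
      integral_density_real[OF meas(3) nonneg(3) p_meas[OF k]]
      integral_density_real[OF meas(4) nonneg(4) p_meas[OF k]]
    by (auto simp: P00_def P0p_def Pp0_def Ppp_def)
  have bc_diag: "(\<integral>x. sqrt (mu00 x * mupp x) \<partial>Q) \<le> 2 * sqrt (real (card K) * \<epsilon>)"
    using int_one by (intro integral_sqrt_mult_le_of_preclusion[OF meas(1,4,2,3) nonneg(1,4,2,3) int
        _ _ _ _ PUC eps finK p_meas p_range p_sum precluded]) simp_all
  have precluded': "\<exists>a\<in>{mu0p, mup0, mu00, mupp}. (\<integral>x. p k x * a x \<partial>Q) \<le> \<epsilon>" if "k \<in> K" for k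
    using precluded[OF that] by blast
  have bc_anti: "(\<integral>x. sqrt (mu0p x * mup0 x) \<partial>Q) \<le> 2 * sqrt (real (card K) * \<epsilon>)"
    using int_one by (intro integral_sqrt_mult_le_of_preclusion[OF meas(2,3,1,4) nonneg(2,3,1,4)
        int(3,4,1,2) _ _ _ _ PUC[symmetric] eps finK p_meas p_range p_sum precluded']) simp_all
  have "hellinger_sq Q mu00 mupp \<le> tv_dist P00 Ppp"
    using hellinger_sq_le_tv_dist[OF meas(1,4) nonneg(1,4)] prob(1,4) by (simp add: P00_def Ppp_def)
  moreover have "hellinger_sq Q mu0p mup0 \<le> tv_dist P0p Pp0"
    using hellinger_sq_le_tv_dist[OF meas(2,3) nonneg(2,3)] prob(2,3) by (simp add: P0p_def Pp0_def)
  ultimately show ?thesis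
    using bc_diag bc_anti unfolding hellinger_sq_def by linarith
qed

end
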